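(* Let $(G,k)$ be an instance of PITVD and let $x$ be a vertex such that there are $\ell\ge4$ distinct pendant trees $C_1,\dots,C_\ell$ attached to $x$. Let $Z=\bigcup_{j=4}^{\ell}C_j$. Then $(G,k)$ is a yes-instance of PITVD if and only if $(G-Z,k)$ is a yes-instance of PITVD.
   Context: PITVD: the input is an undirected multigraph $G$ (no self-loops) and an integer $k$; the question is whether there exists $X\subseteq V(G)$ with $|X|\le k$ such that $G-X$ is a simple graph and every connected component of $G-X$ is a proper interval graph or a tree. If $x$ is a cut vertex of $G$ and $C$ is a connected component of $G-x$ that is a tree such that $C\cup\{x\}$ induces a tree in $G$, then $C$ is called a pendant tree attached to $x$. *)

theory Defs
  imports Main "HOL-Library.Cardinality" Complex_Main
begin

type_synonym 'a mgraph = "'a set \<times> ('a \<Rightarrow> 'a \<Rightarrow> nat)"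

definition verts :: "'a mgraph \<Rightarrow> 'a set" where "verts G = fst G"
definition mult :: "'a mgraph \<Rightarrow> 'a \<Rightarrow> 'a \<Rightarrow> nat" where "mult G = snd G"

definition multigraph :: "'a mgraph \<Rightarrow> bool" where
  "multigraph G \<longleftrightarrow> finite (verts G)
     \<and> (\<forall>u v. mult G u v = mult G v u)
     \<and> (\<forall>v. mult G v v = 0)
     \<and> (\<forall>u v. mult G u v > 0 \<longrightarrow> u \<in> verts G \<and> v \<in> verts G)"

definition adj :: "'a mgraph \<Rightarrow> 'a \<Rightarrow> 'a \<Rightarrow> bool" where
  "adj G u v \<longleftrightarrow> mult G u v > 0"

definition simple :: "'a mgraph \<Rightarrow> bool" where
  "simple G \<longleftrightarrow> (\<forall>u v. mult G u v \<le> 1)"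

definition induced :: "'a mgraph \<Rightarrow> 'a set \<Rightarrow> 'a mgraph" where
  "induced G S = (verts G \<inter> S, \<lambda>u v. if u \<in> S \<and> v \<in> S then mult G u v else 0)"

definition delete :: "'a mgraph \<Rightarrow> 'a set \<Rightarrow> 'a mgraph" where
  "delete G X = induced G (verts G - X)"

definition reach :: "'a mgraph \<Rightarrow> 'a \<Rightarrow> 'a \<Rightarrow> bool" where
  "reach G = (adj G)\<^sup>*\<^sup>*"

definition connected :: "'a mgraph \<Rightarrow> bool" where
  "connected G \<longleftrightarrow> verts G \<noteq> {} \<and> (\<forall>u\<in>verts G. \<forall>v\<in>verts G. reach G u v)"

definition components :: "'a mgraph \<Rightarrow> 'a set set" where
  "components G = {{u. reach G v u} | v. v \<in> verts G}"

definition has_cycle :: "'a mgraph \<Rightarrow> bool" where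
  "has_cycle G \<longleftrightarrow> (\<exists>cs. length cs \<ge> 3 \<and> distinct cs \<and> set cs \<subseteq> verts G
       \<and> (\<forall>i < length cs - 1. adj G (cs ! i) (cs ! Suc i))
       \<and> adj G (last cs) (hd cs))"

definition is_tree :: "'a mgraph \<Rightarrow> bool" where
  "is_tree G \<longleftrightarrow> simple G \<and> connected G \<and> \<not> has_cycle G"

definition proper_interval :: "'a mgraph \<Rightarrow> bool" where
  "proper_interval G \<longleftrightarrow> simple G \<and>
     (\<exists>l r :: 'a \<Rightarrow> real.
        (\<forall>v\<in>verts G. l v \<le> r v)
      \<and> (\<forall>u\<in>verts G. \<forall>v\<in>verts G. u \<noteq> v \<longrightarrow>
            (adj G u v \<longleftrightarrow> max (l u) (l v) \<le> min (r u) (r v)))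
      \<and> (\<forall>u\<in>verts G. \<forall>v\<in>verts G.
            \<not> ({l v..r v} \<subset> {l u..r u})))"

definition pitvd_yes :: "'a mgraph \<Rightarrow> nat \<Rightarrow> bool" where
  "pitvd_yes G k \<longleftrightarrow> (\<exists>X \<subseteq> verts G. card X \<le> k \<and> simple (delete G X) \<and>
     (\<forall>C \<in> components (delete G X).
        proper_interval (induced (delete G X) C) \<or> is_tree (induced (delete G X) C)))"

definition cut_vertex :: "'a mgraph \<Rightarrow> 'a \<Rightarrow> bool" where
  "cut_vertex G x \<longleftrightarrow> x \<in> verts G \<and>
     card (components (delete G {x})) > card (components G)"

definition pendant_tree :: "'a mgraph \<Rightarrow> 'a \<Rightarrow> 'a set \<Rightarrow> bool" where
  "pendant_tree G x C \<longleftrightarrow> cut_vertex G x \<and> C \<in> components (delete G {x})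
     \<and> is_tree (induced G C) \<and> is_tree (induced G (C \<union> {x}))"

end

(* Removing Z only deletes vertices and the target class is hereditary, so a solution for G
   restricts to one for G - Z. Conversely, let X' be a solution for G - Z and W the set of
   remaining vertices. If x is in X', each C_j with j >= 4 becomes a tree component of the
   graph induced by W \<union> Z. If x survives but X' meets a pendant tree, replacing the part of X'
   inside the pendant trees by x costs nothing and again isolates all pendant trees. Otherwise x
   keeps a neighbour in each of C_1, C_2, C_3; these form a claw, so the component of x in G[W]
   is not a proper interval graph, hence a tree, and hanging the trees C_j (j >= 4) at x keeps it
   a tree. *)

theory Submission
  imports Defs
begin

section \<open>Induced subgraphs and components\<close>

lemma verts_induced [simp]: "verts (induced G S) = verts G \<inter> S"
  by (simp add: induced_def verts_def)

lemma mult_induced [simp]: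
  "mult (induced G S) u v = (if u \<in> S \<and> v \<in> S then mult G u v else 0)"
  by (simp add: induced_def mult_def)

lemma adj_induced [simp]: "adj (induced G S) u v \<longleftrightarrow> u \<in> S \<and> v \<in> S \<and> adj G u v"
  by (auto simp: adj_def)

lemma induced_induced [simp]: "induced (induced G A) B = induced G (A \<inter> B)"
  by (auto simp: induced_def verts_def mult_def fun_eq_iff)

lemma simple_induced: "simple (induced G S) \<longleftrightarrow> (\<forall>u\<in>S. \<forall>v\<in>S. mult G u v \<le> 1)"
  by (auto simp: simple_def)

lemma multigraph_adj_sym: "multigraph G \<Longrightarrow> adj G u v \<Longrightarrow> adj G v u"
  by (simp add: multigraph_def adj_def)

lemma multigraph_adj_verts: "multigraph G \<Longrightarrow> adj G u v \<Longrightarrow> u \<in> verts G \<and> v \<in> verts G"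
  by (auto simp: multigraph_def adj_def)

lemma multigraph_not_adj_self: "multigraph G \<Longrightarrow> \<not> adj G v v"
  by (simp add: multigraph_def adj_def)

lemma reach_refl [simp]: "reach H u u"
  by (simp add: reach_def)

lemma reach_step: "adj H u v \<Longrightarrow> reach H u v"
  by (simp add: reach_def)

lemma reach_trans: "reach H u v \<Longrightarrow> reach H v w \<Longrightarrow> reach H u w"
  by (simp add: reach_def)

lemma reach_mono: "(\<And>u v. adj H u v \<Longrightarrow> adj H' u v) \<Longrightarrow> reach H u v \<Longrightarrow> reach H' u v"
  unfolding reach_def by (metis mono_rtranclp)

lemma reach_induced_mono: "reach (induced G A) u v \<Longrightarrow> A \<subseteq> B \<Longrightarrow> reach (induced G B) u v"
  by (erule reach_mono[rotated]) auto

lemma reach_induced_sym: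
  "multigraph G \<Longrightarrow> reach (induced G S) u v \<Longrightarrow> reach (induced G S) v u"
  unfolding reach_def using symp_rtranclp[of "adj (induced G S)"]
  by (auto simp: symp_def dest: multigraph_adj_sym)

lemma reach_induced_closed:
  assumes "reach (induced G S) u w" "u \<in> D"
    and "\<And>a b. a \<in> D \<Longrightarrow> b \<in> S \<Longrightarrow> adj G a b \<Longrightarrow> b \<in> D"
  shows "w \<in> D"
  using assms(1,2) unfolding reach_def
  by (induction rule: rtranclp_induct) (auto intro: assms(3))

lemma walk_reach: "successively (adj H) ps \<Longrightarrow> u \<in> set ps \<Longrightarrow> reach H (hd ps) u"
proof (induction ps rule: induct_list012)
  case (3 a b ps)
  then show ?case
    by (auto intro: reach_trans reach_step)
qed auto

lemma components_iff: "K \<in> components H \<longleftrightarrow> (\<exists>v \<in> verts H. K = {u. reach H v u})"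
  by (auto simp: components_def)

lemma components_induced_subset: "K \<in> components (induced H S) \<Longrightarrow> K \<subseteq> S"
  by (auto simp: components_iff elim!: reach_induced_closed)

lemma component_subset_verts:
  "multigraph G \<Longrightarrow> K \<in> components (induced G S) \<Longrightarrow> K \<subseteq> verts G"
  by (auto simp: components_iff elim!: reach_induced_closed dest: multigraph_adj_verts)

lemma component_eq:
  assumes "multigraph G" "K \<in> components (induced G S)" "w \<in> K"
  shows "K = {u. reach (induced G S) w u}"
proof -
  obtain v where v: "K = {u. reach (induced G S) v u}"
    using assms(2) by (auto simp: components_iff)
  then have "reach (induced G S) v w" "reach (induced G S) w v"
    using assms(3) reach_induced_sym[OF assms(1)] by auto
  then show ?thesis
    using v by (auto intro: reach_trans)
qed

lemma components_eq_if_common_vertex: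
  "multigraph G \<Longrightarrow> K \<in> components (induced G S) \<Longrightarrow> K' \<in> components (induced G S)
    \<Longrightarrow> w \<in> K \<Longrightarrow> w \<in> K' \<Longrightarrow> K = K'"
  using component_eq by metis

lemma reach_component_in_components:
  "v \<in> S \<Longrightarrow> v \<in> verts G \<Longrightarrow> {u. reach (induced G S) v u} \<in> components (induced G S)"
  by (auto simp: components_iff intro!: bexI[of _ v])

lemma component_closed:
  assumes "multigraph G" "K \<in> components (induced G S)" "a \<in> K" "b \<in> S" "adj G a b"
  shows "b \<in> K"
proof -
  have "a \<in> S"
    using components_induced_subset[OF assms(2)] assms(3) by auto
  then show ?thesis
    using component_eq[OF assms(1-3)] assms(4,5) reach_step[of "induced G S" a b] by auto
qed

lemma connected_induced_component:
  assumes mg: "multigraph G" and K: "K \<in> components (induced G S)"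
  shows "connected (induced G K)"
proof -
  obtain v where v: "v \<in> verts G \<inter> S" and K_eq: "K = {u. reach (induced G S) v u}"
    using K by (auto simp: components_iff)
  have from_v: "reach (induced G K) v u" if "reach (induced G S) v u" for u
    using that unfolding reach_def
  proof (induction rule: rtranclp_induct)
    case (step a b)
    then have "a \<in> K" "b \<in> K"
      unfolding K_eq reach_def by (auto intro: rtranclp.rtrancl_into_rtrancl)
    with step show ?case
      by (auto intro: rtranclp.rtrancl_into_rtrancl)
  qed simp
  have "reach (induced G K) u w" if "u \<in> K" "w \<in> K" for u w
  proof -
    have "reach (induced G K) u v" "reach (induced G K) v w"
      using that from_v reach_induced_sym[OF mg] unfolding K_eq by auto
    then show ?thesis
      by (rule reach_trans)
  qed
  then show ?thesis
    unfolding connected_def using v K_eq by auto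
qed

lemma component_if_connected_closed:
  assumes mg: "multigraph G" and "D \<subseteq> S" "D \<subseteq> verts G" "connected (induced G D)"
    and closed: "\<And>a b. a \<in> D \<Longrightarrow> b \<in> S \<Longrightarrow> adj G a b \<Longrightarrow> b \<in> D"
  shows "D \<in> components (induced G S)"
proof -
  obtain v where v: "v \<in> D"
    using assms(4) by (auto simp: connected_def)
  have D_eq: "D = {u. reach (induced G S) v u}"
  proof (intro set_eqI iffI)
    fix u assume "u \<in> D"
    then have "reach (induced G D) v u"
      using assms(3,4) v by (auto simp: connected_def)
    then show "u \<in> {u. reach (induced G S) v u}"
      using assms(2) by (auto intro: reach_induced_mono)
  qed (auto elim: reach_induced_closed intro: v closed)
  have "v \<in> S" "v \<in> verts G"
    using v assms(2,3) by auto
  then show ?thesis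
    unfolding D_eq by (rule reach_component_in_components)
qed

section \<open>Cycles and trees\<close>

definition is_cycle :: "'a mgraph \<Rightarrow> 'a list \<Rightarrow> bool" where
  "is_cycle H cs \<longleftrightarrow> 3 \<le> length cs \<and> distinct cs \<and> set cs \<subseteq> verts H
     \<and> successively (adj H) cs \<and> adj H (last cs) (hd cs)"

lemma has_cycle_iff: "has_cycle H \<longleftrightarrow> (\<exists>cs. is_cycle H cs)"
  unfolding has_cycle_def is_cycle_def successively_conv_nth
  by (metis Suc_eq_plus1 less_diff_conv)

lemma is_cycle_other_vertex: "is_cycle H cs \<Longrightarrow> \<exists>u \<in> set cs. u \<noteq> x"
  by (cases cs rule: remdups_adj.cases) (auto simp: is_cycle_def)

lemma is_cycle_induced_restrict:
  assumes "is_cycle (induced G T) cs" "set cs \<subseteq> A"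
  shows "is_cycle (induced G A) cs"
proof -
  have "cs \<noteq> []"
    using assms(1) by (auto simp: is_cycle_def)
  then show ?thesis
    using assms unfolding is_cycle_def
    by (auto elim!: successively_mono)
qed

lemma has_cycle_induced_mono: "has_cycle (induced G B) \<Longrightarrow> B \<subseteq> A \<Longrightarrow> has_cycle (induced G A)"
  unfolding has_cycle_iff using is_cycle_induced_restrict
  by (metis (no_types, lifting) is_cycle_def le_inf_iff order_trans verts_induced)

lemma is_tree_induced_mono:
  "is_tree (induced G A) \<Longrightarrow> B \<subseteq> A \<Longrightarrow> connected (induced G B) \<Longrightarrow> is_tree (induced G B)"
  unfolding is_tree_def simple_induced using has_cycle_induced_mono by blast

lemma cycle_minus_vertex_reach:
  assumes mg: "multigraph G" and cyc: "is_cycle (induced G S) cs"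
    and u: "u \<in> set cs - {x}" and w: "w \<in> set cs - {x}"
  shows "reach (induced G (S - {x})) u w"
proof -
  have walk: "successively (adj (induced G S)) cs"
    and closing: "adj (induced G S) (last cs) (hd cs)"
    using cyc by (auto simp: is_cycle_def)
  obtain ps where ps: "successively (adj (induced G S)) ps" "set ps = set cs - {x}"
  proof (cases "x \<in> set cs")
    case True
    then obtain as bs where cs: "cs = as @ x # bs"
      by (meson split_list)
    \<comment> \<open>cutting the cycle open at x leaves the walk bs @ as\<close>
    have "successively (adj (induced G S)) as" "successively (adj (induced G S)) bs"
      using walk by (auto simp: cs successively_append_iff successively_Cons)
    moreover have "as \<noteq> [] \<Longrightarrow> bs \<noteq> [] \<Longrightarrow> adj (induced G S) (last bs) (hd as)"
      using closing by (simp add: cs)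
    ultimately have "successively (adj (induced G S)) (bs @ as)"
      by (auto simp: successively_append_iff)
    moreover have "set (bs @ as) = set cs - {x}"
      using cyc by (auto simp: cs is_cycle_def)
    ultimately show ?thesis
      by (rule that)
  next
    case False
    show ?thesis
      by (rule that[of cs]) (use walk False in auto)
  qed
  have walk_avoiding: "successively (adj (induced G (S - {x}))) ps"
    using ps(1) by (rule successively_mono) (use ps(2) in auto)
  have from_hd: "reach (induced G (S - {x})) (hd ps) v" if "v \<in> set cs - {x}" for v
    by (rule walk_reach[OF walk_avoiding]) (use that ps(2) in simp)
  show ?thesis
    using reach_induced_sym[OF mg from_hd[OF u]] from_hd[OF w] by (rule reach_trans)
qed

lemma cycle_within_closed_set:
  assumes mg: "multigraph G" and cyc: "is_cycle (induced G S) cs"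
    and u: "u \<in> set cs" "u \<noteq> x" "u \<in> K"
    and closed: "\<And>a b. a \<in> K \<Longrightarrow> b \<in> S - {x} \<Longrightarrow> adj G a b \<Longrightarrow> b \<in> K"
  shows "set cs \<subseteq> insert x K"
proof
  fix w assume w: "w \<in> set cs"
  show "w \<in> insert x K"
  proof (cases "w = x")
    case False
    then have "reach (induced G (S - {x})) u w"
      using cycle_minus_vertex_reach[OF mg cyc] u w by blast
    then have "w \<in> K"
      using u(3) by (rule reach_induced_closed) (rule closed)
    then show ?thesis
      by simp
  qed simp
qed

section \<open>Proper interval graphs and claws\<close>

lemma proper_interval_induced_mono:
  assumes "proper_interval (induced G A)" "B \<subseteq> A"
  shows "proper_interval (induced G B)"
proof -
  obtain l r :: "'a \<Rightarrow> real" where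
      "\<forall>v\<in>verts G \<inter> A. l v \<le> r v"
      "\<forall>u\<in>verts G \<inter> A. \<forall>v\<in>verts G \<inter> A. u \<noteq> v \<longrightarrow>
         (adj G u v \<longleftrightarrow> max (l u) (l v) \<le> min (r u) (r v))"
      "\<forall>u\<in>verts G \<inter> A. \<forall>v\<in>verts G \<inter> A. \<not> {l v..r v} \<subset> {l u..r u}"
    using assms(1) unfolding proper_interval_def by auto
  moreover have "simple (induced G B)"
    using assms unfolding proper_interval_def simple_induced by blast
  ultimately show ?thesis
    unfolding proper_interval_def using assms(2)
    by (simp only: verts_induced adj_induced) blast
qed

(* The middle one of three pairwise disjoint intervals that all meet [a, b] lies inside it. *)
lemma interval_claw:
  fixes a b a1 b1 a2 b2 a3 b3 :: real
  assumes "a1 \<le> b1" "a2 \<le> b2" "a3 \<le> b3"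
    and "max a a1 \<le> min b b1" "max a a2 \<le> min b b2" "max a a3 \<le> min b b3"
    and "\<not> max a1 a2 \<le> min b1 b2" "\<not> max a1 a3 \<le> min b1 b3" "\<not> max a2 a3 \<le> min b2 b3"
  shows "{a1..b1} \<subset> {a..b} \<or> {a2..b2} \<subset> {a..b} \<or> {a3..b3} \<subset> {a..b}"
  using assms unfolding atLeastatMost_psubset_iff max_def min_def
  by (smt (verit))

lemma claw_not_proper_interval:
  assumes "{x, y1, y2, y3} \<subseteq> verts H" "distinct [x, y1, y2, y3]"
    and "adj H x y1" "adj H x y2" "adj H x y3"
    and "\<not> adj H y1 y2" "\<not> adj H y1 y3" "\<not> adj H y2 y3"
  shows "\<not> proper_interval H"
proof
  assume "proper_interval H"
  then obtain l r :: "'a \<Rightarrow> real" where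
      lr: "\<forall>v\<in>verts H. l v \<le> r v"
    and adj_iff: "\<forall>u\<in>verts H. \<forall>v\<in>verts H. u \<noteq> v \<longrightarrow>
         (adj H u v \<longleftrightarrow> max (l u) (l v) \<le> min (r u) (r v))"
    and proper: "\<forall>u\<in>verts H. \<forall>v\<in>verts H. \<not> {l v..r v} \<subset> {l u..r u}"
    unfolding proper_interval_def by blast
  have edge: "max (l u) (l v) \<le> min (r u) (r v) \<longleftrightarrow> adj H u v"
    if "u \<in> verts H" "v \<in> verts H" "u \<noteq> v" for u v
    using adj_iff that by blast
  have "{l y1..r y1} \<subset> {l x..r x} \<or> {l y2..r y2} \<subset> {l x..r x} \<or> {l y3..r y3} \<subset> {l x..r x}"
  proof (rule interval_claw)
    have "x \<in> verts H" "y1 \<in> verts H" "y2 \<in> verts H" "y3 \<in> verts H"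
      and "x \<noteq> y1" "x \<noteq> y2" "x \<noteq> y3" "y1 \<noteq> y2" "y1 \<noteq> y3" "y2 \<noteq> y3"
      using assms(1,2) by auto
    with assms(3-8) lr
    show "l y1 \<le> r y1" "l y2 \<le> r y2" "l y3 \<le> r y3"
      "max (l x) (l y1) \<le> min (r x) (r y1)" "max (l x) (l y2) \<le> min (r x) (r y2)"
      "max (l x) (l y3) \<le> min (r x) (r y3)"
      "\<not> max (l y1) (l y2) \<le> min (r y1) (r y2)" "\<not> max (l y1) (l y3) \<le> min (r y1) (r y3)"
      "\<not> max (l y2) (l y3) \<le> min (r y2) (r y3)"
      by (simp_all only: edge simp_thms)
  qed
  then show False
    using proper assms(1) by auto
qed

section \<open>Solutions of PITVD\<close>

lemma card_insert_Diff_le: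
  assumes "finite A" "A \<inter> B \<noteq> {}"
  shows "card (insert x (A - B)) \<le> card A"
proof -
  have "card (A - B) < card A"
    using assms by (intro psubset_card_mono) auto
  moreover have "card (insert x (A - B)) \<le> Suc (card (A - B))"
    using assms(1) by (simp add: card_insert_if)
  ultimately show ?thesis
    by linarith
qed

definition induces_pit :: "'a mgraph \<Rightarrow> 'a set \<Rightarrow> bool" where
  "induces_pit G S \<longleftrightarrow> simple (induced G S) \<and>
     (\<forall>K \<in> components (induced G S). proper_interval (induced G K) \<or> is_tree (induced G K))"

lemma pitvd_yes_iff:
  "pitvd_yes H k \<longleftrightarrow> (\<exists>X \<subseteq> verts H. card X \<le> k \<and> induces_pit H (verts H - X))"
proof -
  have "induced (delete H X) K = induced H K" if "K \<in> components (delete H X)" for X K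
    using components_induced_subset[of K H "verts H - X"] that
    by (simp add: delete_def Int_absorb1)
  then show ?thesis
    unfolding pitvd_yes_def induces_pit_def delete_def by auto
qed

lemma induces_pit_induced: "induces_pit (induced G A) S \<longleftrightarrow> induces_pit G (A \<inter> S)"
proof -
  have "induced G (A \<inter> K) = induced G K" if "K \<in> components (induced G (A \<inter> S))" for K
    using components_induced_subset[OF that] by (simp add: Int_absorb1)
  then show ?thesis
    unfolding induces_pit_def by auto
qed

lemma pitvd_yes_delete_iff:
  "pitvd_yes (delete G Z) k \<longleftrightarrow>
    (\<exists>X \<subseteq> verts G - Z. card X \<le> k \<and> induces_pit G (verts G - Z - X))"
proof -
  have "induces_pit (delete G Z) (verts G - Z - X) \<longleftrightarrow> induces_pit G (verts G - Z - X)" for X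
    by (auto simp: delete_def induces_pit_induced Int_absorb1)
  then show ?thesis
    by (simp add: pitvd_yes_iff delete_def Int_absorb1 Diff_subset)
qed

lemma induces_pit_mono:
  assumes mg: "multigraph G" and pit: "induces_pit G S" and "T \<subseteq> S"
  shows "induces_pit G T"
  unfolding induces_pit_def
proof (intro conjI ballI)
  show "simple (induced G T)"
    using pit \<open>T \<subseteq> S\<close> by (auto simp: induces_pit_def simple_induced)
next
  fix K assume K: "K \<in> components (induced G T)"
  then obtain v where v: "v \<in> verts G \<inter> T" "K = {u. reach (induced G T) v u}"
    by (auto simp: components_iff)
  define K' where "K' = {u. reach (induced G S) v u}"
  have K': "K' \<in> components (induced G S)"
    unfolding K'_def using v(1) \<open>T \<subseteq> S\<close> by (auto intro: reach_component_in_components)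
  have "K \<subseteq> K'"
    unfolding v(2) K'_def using \<open>T \<subseteq> S\<close> by (auto intro: reach_induced_mono)
  moreover have "proper_interval (induced G K') \<or> is_tree (induced G K')"
    using pit K' by (auto simp: induces_pit_def)
  ultimately show "proper_interval (induced G K) \<or> is_tree (induced G K)"
    using proper_interval_induced_mono is_tree_induced_mono connected_induced_component[OF mg K]
    by blast
qed

lemma pitvd_yes_delete:
  assumes mg: "multigraph G" and "pitvd_yes G k"
  shows "pitvd_yes (delete G Z) k"
proof -
  obtain X where X: "X \<subseteq> verts G" "card X \<le> k" "induces_pit G (verts G - X)"
    using assms(2) unfolding pitvd_yes_iff by blast
  have "finite X"
    using X(1) mg finite_subset by (auto simp: multigraph_def)
  then have "card (X - Z) \<le> card X"
    by (rule card_mono) blast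
  then have "card (X - Z) \<le> k"
    using X(2) by linarith
  moreover have "induces_pit G (verts G - Z - (X - Z))"
    using X(3) by (rule induces_pit_mono[OF mg]) blast
  moreover have "X - Z \<subseteq> verts G - Z"
    using X(1) by blast
  ultimately show ?thesis
    unfolding pitvd_yes_delete_iff by blast
qed

section \<open>Pendant trees at a common vertex\<close>

locale pendant_trees =
  fixes G :: "'a mgraph" and x :: 'a and I :: "'i set" and C :: "'i \<Rightarrow> 'a set"
  assumes multigraph_G: "multigraph G" and apex_in_verts: "x \<in> verts G"
    and pendant: "j \<in> I \<Longrightarrow> pendant_tree G x (C j)"
begin

lemma pendant_component: "j \<in> I \<Longrightarrow> C j \<in> components (induced G (verts G - {x}))"
  using pendant by (auto simp: pendant_tree_def delete_def)

lemma pendant_subset: "j \<in> I \<Longrightarrow> C j \<subseteq> verts G - {x}"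
  using components_induced_subset pendant_component by blast

lemma pendant_is_tree: "j \<in> I \<Longrightarrow> is_tree (induced G (C j))"
  using pendant by (auto simp: pendant_tree_def)

lemma pendant_insert_is_tree: "j \<in> I \<Longrightarrow> is_tree (induced G (insert x (C j)))"
  using pendant by (auto simp: pendant_tree_def)

lemma pendant_adj: "j \<in> I \<Longrightarrow> a \<in> C j \<Longrightarrow> adj G a b \<Longrightarrow> b \<in> C j \<or> b = x"
  using component_closed[OF multigraph_G pendant_component] multigraph_adj_verts[OF multigraph_G]
  by blast

lemma pendant_disjoint: "i \<in> I \<Longrightarrow> j \<in> I \<Longrightarrow> C i \<noteq> C j \<Longrightarrow> C i \<inter> C j = {}"
  using components_eq_if_common_vertex[OF multigraph_G pendant_component pendant_component] by blast

lemma pendant_neighbour: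
  assumes j: "j \<in> I"
  shows "\<exists>y \<in> C j. adj G x y"
proof (rule ccontr)
  assume no_neighbour: "\<not> (\<exists>y \<in> C j. adj G x y)"
  have "connected (induced G (insert x (C j)))" "connected (induced G (C j))"
    using pendant_insert_is_tree[OF j] pendant_is_tree[OF j] by (auto simp: is_tree_def)
  then obtain c where c: "c \<in> C j" "c \<in> verts G" "reach (induced G (insert x (C j))) x c"
    using apex_in_verts by (auto simp: connected_def)
  then have "c \<in> {x}"
    by (elim reach_induced_closed) (use no_neighbour multigraph_not_adj_self[OF multigraph_G] in auto)
  then show False
    using c(1) pendant_subset[OF j] by auto
qed

lemma simple_union_pendants:
  assumes "simple (induced G W)"
  shows "simple (induced G (W \<union> (\<Union>j\<in>I. C j)))"
  unfolding simple_induced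
proof (intro ballI)
  fix u v assume u: "u \<in> W \<union> (\<Union>j\<in>I. C j)" and v: "v \<in> W \<union> (\<Union>j\<in>I. C j)"
  show "mult G u v \<le> 1"
  proof (cases "adj G u v")
    case False
    then show ?thesis by (simp add: adj_def)
  next
    case uv: True
    show ?thesis
    proof (cases "u \<in> W \<and> v \<in> W")
      case True
      with assms show ?thesis by (simp add: simple_induced)
    next
      case False
      then have "\<exists>j\<in>I. u \<in> insert x (C j) \<and> v \<in> insert x (C j)"
        using u v pendant_adj uv multigraph_adj_sym[OF multigraph_G uv] by blast
      then show ?thesis
        using pendant_insert_is_tree by (auto simp: is_tree_def simple_induced)
    qed
  qed
qed

lemma pendant_in_components:
  assumes "j \<in> I" "C j \<subseteq> S" "x \<notin> S"
  shows "C j \<in> components (induced G S)"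
proof (rule component_if_connected_closed[OF multigraph_G])
  show "C j \<subseteq> S" "C j \<subseteq> verts G" "connected (induced G (C j))"
    using assms pendant_subset pendant_is_tree by (auto simp: is_tree_def)
  show "b \<in> C j" if "a \<in> C j" "b \<in> S" "adj G a b" for a b
    using pendant_adj[OF assms(1) that(1,3)] that(2) assms(3) by blast
qed

lemma component_in_union_pendants:
  assumes K: "K \<in> components (induced G W)" and "x \<notin> K" and disj: "\<forall>j\<in>I. W \<inter> C j = {}"
  shows "K \<in> components (induced G (W \<union> (\<Union>j\<in>I. C j)))"
proof (rule component_if_connected_closed[OF multigraph_G])
  show "K \<subseteq> W \<union> (\<Union>j\<in>I. C j)"
    using components_induced_subset[OF K] by auto
  show "K \<subseteq> verts G" "connected (induced G K)"
    using component_subset_verts[OF multigraph_G K] connected_induced_component[OF multigraph_G K] .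
  fix a b assume ab: "a \<in> K" "b \<in> W \<union> (\<Union>j\<in>I. C j)" "adj G a b"
  have "a \<in> W"
    using components_induced_subset[OF K] ab(1) by auto
  then have "b \<notin> C j" if "j \<in> I" for j
    using pendant_adj[OF that _ multigraph_adj_sym[OF multigraph_G ab(3)]] disj that ab(1) \<open>x \<notin> K\<close>
    by blast
  then show "b \<in> K"
    using component_closed[OF multigraph_G K ab(1) _ ab(3)] ab(2) by blast
qed

lemma connected_union_pendants:
  assumes conn: "connected (induced G T)" and "x \<in> T"
  shows "connected (induced G (T \<union> (\<Union>j\<in>I. C j)))"
proof -
  let ?T' = "T \<union> (\<Union>j\<in>I. C j)"
  have from_apex: "reach (induced G ?T') x u" if u: "u \<in> verts G \<inter> ?T'" for u
  proof (cases "u \<in> T")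
    case True
    then have "reach (induced G T) x u"
      using conn apex_in_verts \<open>x \<in> T\<close> u by (auto simp: connected_def)
    then show ?thesis
      by (rule reach_induced_mono) auto
  next
    case False
    then obtain j where j: "j \<in> I" "u \<in> C j"
      using u by auto
    then have "reach (induced G (insert x (C j))) x u"
      using pendant_insert_is_tree[OF j(1)] apex_in_verts u by (auto simp: is_tree_def connected_def)
    then show ?thesis
      by (rule reach_induced_mono) (use \<open>x \<in> T\<close> j in auto)
  qed
  have "reach (induced G ?T') u v" if "u \<in> verts G \<inter> ?T'" "v \<in> verts G \<inter> ?T'" for u v
    using reach_induced_sym[OF multigraph_G from_apex[OF that(1)]] from_apex[OF that(2)]
    by (rule reach_trans)
  then show ?thesis
    unfolding connected_def verts_induced using apex_in_verts \<open>x \<in> T\<close> by blast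
qed

lemma not_is_cycle_union_pendants:
  assumes tree: "is_tree (induced G T)" and "x \<in> T" and disj: "\<forall>j\<in>I. T \<inter> C j = {}"
  shows "\<not> is_cycle (induced G (T \<union> (\<Union>j\<in>I. C j))) cs"
proof
  assume cyc: "is_cycle (induced G (T \<union> (\<Union>j\<in>I. C j))) cs"
  then obtain u where u: "u \<in> set cs" "u \<noteq> x"
    using is_cycle_other_vertex[OF cyc] by blast
  then have "u \<in> T \<union> (\<Union>j\<in>I. C j)"
    using cyc by (auto simp: is_cycle_def)
  then show False
  proof (cases "u \<in> T")
    case True
    have "set cs \<subseteq> insert x (T - {x})"
    proof (rule cycle_within_closed_set[OF multigraph_G cyc u])
      show "u \<in> T - {x}" using True u(2) by simp
      fix a b assume ab: "a \<in> T - {x}" "b \<in> T \<union> (\<Union>j\<in>I. C j) - {x}" "adj G a b"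
      have "b \<notin> C j" if "j \<in> I" for j
        using pendant_adj[OF that _ multigraph_adj_sym[OF multigraph_G ab(3)]] disj that ab(1)
        by blast
      then show "b \<in> T - {x}"
        using ab(2) by blast
    qed
    then have "is_cycle (induced G T) cs"
      using is_cycle_induced_restrict[OF cyc] \<open>x \<in> T\<close> by (simp add: insert_absorb)
    then show False
      using tree unfolding is_tree_def has_cycle_iff by blast
  next
    case False
    then obtain j where j: "j \<in> I" "u \<in> C j"
      using \<open>u \<in> T \<union> (\<Union>j\<in>I. C j)\<close> by auto
    have "set cs \<subseteq> insert x (C j)"
      by (rule cycle_within_closed_set[OF multigraph_G cyc u j(2)]) (use pendant_adj[OF j(1)] in blast)
    then have "is_cycle (induced G (insert x (C j))) cs"
      by (rule is_cycle_induced_restrict[OF cyc])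
    then show False
      using pendant_insert_is_tree[OF j(1)] unfolding is_tree_def has_cycle_iff by blast
  qed
qed

lemma is_tree_union_pendants:
  assumes tree: "is_tree (induced G T)" and "x \<in> T" and disj: "\<forall>j\<in>I. T \<inter> C j = {}"
  shows "is_tree (induced G (T \<union> (\<Union>j\<in>I. C j)))"
proof -
  have "simple (induced G (T \<union> (\<Union>j\<in>I. C j)))" "connected (induced G (T \<union> (\<Union>j\<in>I. C j)))"
    using tree \<open>x \<in> T\<close> simple_union_pendants connected_union_pendants by (auto simp: is_tree_def)
  with not_is_cycle_union_pendants[OF assms] show ?thesis
    by (simp add: is_tree_def has_cycle_iff)
qed

lemma component_through_apex_union_pendants:
  assumes K: "K \<in> components (induced G W)" and "x \<in> K" and disj: "\<forall>j\<in>I. W \<inter> C j = {}"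
  shows "K \<union> (\<Union>j\<in>I. C j) \<in> components (induced G (W \<union> (\<Union>j\<in>I. C j)))"
proof (rule component_if_connected_closed[OF multigraph_G])
  show "K \<union> (\<Union>j\<in>I. C j) \<subseteq> W \<union> (\<Union>j\<in>I. C j)"
    using components_induced_subset[OF K] by auto
  show "K \<union> (\<Union>j\<in>I. C j) \<subseteq> verts G"
    using component_subset_verts[OF multigraph_G K] pendant_subset by auto
  show "connected (induced G (K \<union> (\<Union>j\<in>I. C j)))"
    using connected_induced_component[OF multigraph_G K] \<open>x \<in> K\<close> by (rule connected_union_pendants)
  fix a b assume ab: "a \<in> K \<union> (\<Union>j\<in>I. C j)" "b \<in> W \<union> (\<Union>j\<in>I. C j)" "adj G a b"
  show "b \<in> K \<union> (\<Union>j\<in>I. C j)"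
  proof (cases "a \<in> K")
    case True
    then show ?thesis
      using component_closed[OF multigraph_G K _ _ ab(3)] ab(2) by blast
  next
    case False
    then show ?thesis
      using ab pendant_adj \<open>x \<in> K\<close> by blast
  qed
qed

lemma components_union_pendants_cases [consumes 3]:
  assumes "W \<subseteq> verts G" and disj: "\<forall>j\<in>I. W \<inter> C j = {}"
    and F: "F \<in> components (induced G (W \<union> (\<Union>j\<in>I. C j)))"
  obtains (away_from_apex) K where "K \<in> components (induced G W)" "x \<notin> K" "F = K"
    | (through_apex) K where "K \<in> components (induced G W)" "x \<in> K" "F = K \<union> (\<Union>j\<in>I. C j)"
    | (pendant_alone) j where "j \<in> I" "x \<notin> W" "F = C j"
proof -
  obtain v where "v \<in> verts G \<inter> (W \<union> (\<Union>j\<in>I. C j))"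
    and "F = {u. reach (induced G (W \<union> (\<Union>j\<in>I. C j))) v u}"
    using F by (auto simp: components_iff)
  then have v: "v \<in> verts G" "v \<in> W \<union> (\<Union>j\<in>I. C j)" "v \<in> F"
    by auto
  define comp where "comp u = {w. reach (induced G W) u w}" for u
  have comp: "comp u \<in> components (induced G W)" "u \<in> comp u" if "u \<in> W" "u \<in> verts G" for u
    unfolding comp_def using that by (auto intro: reach_component_in_components)
  show thesis
  proof (cases "x \<in> W \<and> (v \<in> W \<longrightarrow> v \<in> comp x)")
    case True
    then have K: "comp x \<in> components (induced G W)" "x \<in> comp x"
      using comp apex_in_verts by blast+
    have "v \<in> comp x \<union> (\<Union>j\<in>I. C j)"
      using True v(2) by blast
    then have "F = comp x \<union> (\<Union>j\<in>I. C j)"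
      using components_eq_if_common_vertex[OF multigraph_G F
          component_through_apex_union_pendants[OF K disj] v(3)] by blast
    with K show thesis
      by (rule through_apex)
  next
    case False
    show thesis
    proof (cases "v \<in> W")
      case True
      note K = comp[OF True v(1)]
      have "x \<notin> comp v"
      proof
        assume "x \<in> comp v"
        then have "x \<in> W"
          using components_induced_subset[OF K(1)] by blast
        moreover have "v \<in> comp x"
          using reach_induced_sym[OF multigraph_G] \<open>x \<in> comp v\<close> unfolding comp_def by blast
        ultimately show False
          using False by blast
      qed
      then have "F = comp v"
        using components_eq_if_common_vertex[OF multigraph_G F
            component_in_union_pendants[OF K(1) _ disj] v(3) K(2)] by simp
      with K(1) \<open>x \<notin> comp v\<close> show thesis
        by (rule away_from_apex)
    next
      case False
      then obtain j where j: "j \<in> I" "v \<in> C j"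
        using v(2) by blast
      have "x \<notin> W"
        using False \<open>\<not> (x \<in> W \<and> (v \<in> W \<longrightarrow> v \<in> comp x))\<close> by blast
      then have "C j \<subseteq> W \<union> (\<Union>j\<in>I. C j)" "x \<notin> W \<union> (\<Union>j\<in>I. C j)"
        using j(1) pendant_subset by blast+
      then have "F = C j"
        using components_eq_if_common_vertex[OF multigraph_G F
            pendant_in_components[OF j(1)] v(3) j(2)] by simp
      with j(1) \<open>x \<notin> W\<close> show thesis
        by (rule pendant_alone)
    qed
  qed
qed

lemma induces_pit_union_pendants:
  assumes pit: "induces_pit G W" and "W \<subseteq> verts G" and disj: "\<forall>j\<in>I. W \<inter> C j = {}"
    and apex_tree: "\<forall>K\<in>components (induced G W). x \<in> K \<longrightarrow> is_tree (induced G K)"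
  shows "induces_pit G (W \<union> (\<Union>j\<in>I. C j))"
  unfolding induces_pit_def
proof (intro conjI ballI)
  show "simple (induced G (W \<union> (\<Union>j\<in>I. C j)))"
    using pit by (intro simple_union_pendants) (simp add: induces_pit_def)
  fix F assume F: "F \<in> components (induced G (W \<union> (\<Union>j\<in>I. C j)))"
  show "proper_interval (induced G F) \<or> is_tree (induced G F)"
  using \<open>W \<subseteq> verts G\<close> disj F
  proof (cases rule: components_union_pendants_cases)
    case (away_from_apex K)
    then show ?thesis
      using pit by (auto simp: induces_pit_def)
  next
    case (through_apex K)
    have "is_tree (induced G (K \<union> (\<Union>j\<in>I. C j)))"
    proof (rule is_tree_union_pendants)
      show "is_tree (induced G K)" "x \<in> K"
        using apex_tree through_apex(1,2) by auto
      show "\<forall>j\<in>I. K \<inter> C j = {}"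
        using components_induced_subset[OF through_apex(1)] disj by blast
    qed
    then show ?thesis
      using through_apex(3) by simp
  next
    case (pendant_alone j)
    then show ?thesis
      using pendant_is_tree by simp
  qed
qed

lemma component_with_three_pendants_not_proper_interval:
  assumes K: "K \<in> components (induced G W)" and "x \<in> K"
    and "{i, j, m} \<subseteq> I" "distinct [C i, C j, C m]" "C i \<union> C j \<union> C m \<subseteq> W"
  shows "\<not> proper_interval (induced G K)"
proof -
  have ijm: "i \<in> I" "j \<in> I" "m \<in> I"
    using assms(3) by auto
  obtain yi yj ym where y: "yi \<in> C i" "yj \<in> C j" "ym \<in> C m"
    and edges: "adj G x yi" "adj G x yj" "adj G x ym"
    using pendant_neighbour[OF ijm(1)] pendant_neighbour[OF ijm(2)] pendant_neighbour[OF ijm(3)]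
    by blast
  have in_K: "yi \<in> K" "yj \<in> K" "ym \<in> K"
    using component_closed[OF multigraph_G K \<open>x \<in> K\<close>] edges y assms(5) by blast+
  have in_V: "x \<in> verts G" "yi \<in> verts G" "yj \<in> verts G" "ym \<in> verts G"
    using multigraph_adj_verts[OF multigraph_G] edges by blast+
  have disjoint: "C i \<inter> C j = {}" "C i \<inter> C m = {}" "C j \<inter> C m = {}"
    using pendant_disjoint ijm assms(4) by auto
  have apex_outside: "x \<notin> C i" "x \<notin> C j" "x \<notin> C m"
    using pendant_subset ijm by auto
  have "\<not> adj G yi yj" "\<not> adj G yi ym" "\<not> adj G yj ym"
    using pendant_adj[OF ijm(1) y(1)] pendant_adj[OF ijm(2) y(2)] y disjoint apex_outside
    by blast+
  then have non_edges_K: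
    "\<not> adj (induced G K) yi yj" "\<not> adj (induced G K) yi ym" "\<not> adj (induced G K) yj ym"
    by simp_all
  have "{x, yi, yj, ym} \<subseteq> verts (induced G K)"
    using in_K in_V \<open>x \<in> K\<close> by auto
  moreover have "distinct [x, yi, yj, ym]"
    using y disjoint apex_outside by auto
  moreover have "adj (induced G K) x yi" "adj (induced G K) x yj" "adj (induced G K) x ym"
    using edges in_K \<open>x \<in> K\<close> by auto
  ultimately show ?thesis
    using non_edges_K by (rule claw_not_proper_interval)
qed


lemma induces_pit_swap_pendants_for_apex:
  assumes pit: "induces_pit G W" and "W \<subseteq> verts G"
  shows "induces_pit G (W - {x} \<union> (\<Union>j\<in>I. C j))"
proof -
  let ?W' = "W - {x} - (\<Union>j\<in>I. C j)"
  have "induces_pit G (?W' \<union> (\<Union>j\<in>I. C j))"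
  proof (rule induces_pit_union_pendants)
    show "induces_pit G ?W'"
      using multigraph_G pit by (rule induces_pit_mono) blast
    show "?W' \<subseteq> verts G" "\<forall>j\<in>I. ?W' \<inter> C j = {}"
      using \<open>W \<subseteq> verts G\<close> by blast+
    show "\<forall>K\<in>components (induced G ?W'). x \<in> K \<longrightarrow> is_tree (induced G K)"
      using components_induced_subset by blast
  qed
  moreover have "?W' \<union> (\<Union>j\<in>I. C j) = W - {x} \<union> (\<Union>j\<in>I. C j)"
    by blast
  ultimately show ?thesis
    by simp
qed

lemma induces_pit_restore_pendants:
  assumes pit: "induces_pit G (verts G - (\<Union>j\<in>I. C j) - X)"
    and apex_tree: "\<forall>K\<in>components (induced G (verts G - (\<Union>j\<in>I. C j) - X)).
      x \<in> K \<longrightarrow> is_tree (induced G K)"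
    and "X \<inter> (\<Union>j\<in>I. C j) = {}"
  shows "induces_pit G (verts G - X)"
proof -
  have "induces_pit G (verts G - (\<Union>j\<in>I. C j) - X \<union> (\<Union>j\<in>I. C j))"
    by (rule induces_pit_union_pendants[OF pit _ _ apex_tree]) auto
  moreover have "(\<Union>j\<in>I. C j) \<subseteq> verts G"
    using pendant_subset by blast
  then have "verts G - (\<Union>j\<in>I. C j) - X \<union> (\<Union>j\<in>I. C j) = verts G - X"
    using \<open>X \<inter> (\<Union>j\<in>I. C j) = {}\<close> by blast
  ultimately show ?thesis
    by simp
qed

lemma pendant_subset_Diff:
  assumes "inj_on C I" "i \<in> I" "J \<subseteq> I" "i \<notin> J" "X \<inter> C i = {}"
  shows "C i \<subseteq> verts G - (\<Union>j\<in>J. C j) - X"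
proof -
  have "C i \<inter> C j = {}" if "j \<in> J" for j
  proof (rule pendant_disjoint[OF assms(2)])
    have "j \<in> I" "i \<noteq> j"
      using that assms(3,4) by auto
    then show "j \<in> I" "C i \<noteq> C j"
      using inj_on_contraD[OF assms(1) _ assms(2)] by blast+
  qed
  then show ?thesis
    using pendant_subset[OF assms(2)] assms(5) by blast
qed


lemma apex_component_is_tree:
  assumes inj: "inj_on C I" and pit: "induces_pit G (verts G - (\<Union>j\<in>J. C j) - X)"
    and "J \<subseteq> I" "{i1, i2, i3} \<subseteq> I - J" "distinct [i1, i2, i3]" "X \<inter> (\<Union>j\<in>I. C j) = {}"
  shows "\<forall>K\<in>components (induced G (verts G - (\<Union>j\<in>J. C j) - X)).
    x \<in> K \<longrightarrow> is_tree (induced G K)"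
proof -
  have "C i \<subseteq> verts G - (\<Union>j\<in>J. C j) - X" if "i \<in> {i1, i2, i3}" for i
  proof (rule pendant_subset_Diff[OF inj])
    show "i \<in> I" "J \<subseteq> I" "i \<notin> J" "X \<inter> C i = {}"
      using that assms(3-6) by blast+
  qed
  moreover have "distinct [C i1, C i2, C i3]"
    using assms(4,5) inj_on_contraD[OF inj] by auto
  ultimately show ?thesis
    using component_with_three_pendants_not_proper_interval[of _ _ i1 i2 i3] pit assms(4)
    by (auto simp: induces_pit_def)
qed
end

lemma induces_pit_lift_over_pendant_trees:
  fixes C :: "nat \<Rightarrow> 'a set"
  assumes mg: "multigraph G" and "x \<in> verts G" and "4 \<le> l" and inj: "inj_on C {1..l}"
    and "\<forall>j\<in>{1..l}. pendant_tree G x (C j)"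
    and X': "X' \<subseteq> verts G - (\<Union>j\<in>{4..l}. C j)"
    and pit: "induces_pit G (verts G - (\<Union>j\<in>{4..l}. C j) - X')"
  shows "\<exists>X \<subseteq> verts G. card X \<le> card X' \<and> induces_pit G (verts G - X)"
proof -
  interpret all: pendant_trees G x "{1..l}" C
    using assms by unfold_locales auto
  interpret far: pendant_trees G x "{4..l}" C
    using assms by unfold_locales auto
  define U where "U = (\<Union>j\<in>{1..l}. C j)"
  define W where "W = verts G - (\<Union>j\<in>{4..l}. C j) - X'"
  consider (apex_tree) "\<forall>K\<in>components (induced G W). x \<in> K \<longrightarrow> is_tree (induced G K)"
    | (swap) "x \<notin> X'" "X' \<inter> U \<noteq> {}"
  proof (cases "x \<in> X' \<or> X' \<inter> U \<noteq> {}")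
    case True
    then show thesis
      using that components_induced_subset unfolding W_def by blast
  next
    case False
    have "{1, 2, 3} \<subseteq> {1..l} - {4..l}"
      using \<open>4 \<le> l\<close> by auto
    then show thesis
      using all.apex_component_is_tree[OF inj pit, of 1 2 3] that(1) False
      unfolding W_def U_def by auto
  qed
  then show ?thesis
  proof cases
    case apex_tree
    have "induces_pit G (verts G - X')"
      using pit apex_tree X' unfolding W_def by (intro far.induces_pit_restore_pendants) blast+
    then show ?thesis
      using X' by blast
  next
    case swap
    \<comment> \<open>deleting x instead of the vertices of X' inside pendant trees detaches them all\<close>
    define X where "X = insert x (X' - U)"
    have "finite X'"
      by (rule finite_subset[OF X']) (use mg in \<open>simp add: multigraph_def\<close>)
    then have "card X \<le> card X'"
      unfolding X_def using swap(2) by (rule card_insert_Diff_le)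
    have "U \<subseteq> verts G - {x}"
      unfolding U_def using all.pendant_subset by blast
    moreover have "(\<Union>j\<in>{4..l}. C j) \<subseteq> U"
      unfolding U_def by (intro UN_mono) auto
    ultimately have "X \<subseteq> verts G" "verts G - X = W - {x} \<union> U"
      using X' \<open>x \<in> verts G\<close> unfolding W_def X_def by blast+
    moreover have "induces_pit G (W - {x} \<union> U)"
      unfolding U_def using pit W_def by (intro all.induces_pit_swap_pendants_for_apex) auto
    ultimately show ?thesis
      using \<open>card X \<le> card X'\<close> by auto
  qed
qed

theorem lemma21:
  fixes G :: "'a mgraph" and k :: nat and x :: 'a and l :: nat and C :: "nat \<Rightarrow> 'a set"
  assumes "multigraph G"
    and "x \<in> verts G"
    and "l \<ge> 4"
    and "inj_on C {1..l}"
    and "\<forall>j\<in>{1..l}. pendant_tree G x (C j)"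
    and "Z = (\<Union>j\<in>{4..l}. C j)"
  shows "pitvd_yes G k \<longleftrightarrow> pitvd_yes (delete G Z) k"
proof
  assume "pitvd_yes G k"
  then show "pitvd_yes (delete G Z) k"
    by (rule pitvd_yes_delete[OF assms(1)])
next
  assume "pitvd_yes (delete G Z) k"
  then obtain X' where X': "X' \<subseteq> verts G - Z" "card X' \<le> k" "induces_pit G (verts G - Z - X')"
    unfolding pitvd_yes_delete_iff by blast
  then obtain X where "X \<subseteq> verts G" "card X \<le> k" "induces_pit G (verts G - X)"
    using induces_pit_lift_over_pendant_trees[OF assms(1-5) X'(1,3)[unfolded assms(6)]] by force
  then show "pitvd_yes G k"
    unfolding pitvd_yes_iff by blast
qed

end
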